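(* Let $\rho>0$, $\mu>0$, and let $\gamma$ be a critical curve of $\mathbf{\Theta}_\mu$ in $\mathbb S^2(\rho)=\{x_1^2+x_2^2+x_3^2=1/\rho\}\subset\mathbb R^3$ with non-constant curvature $\kappa$ and with constant $d>0$ in the first integral $\mu^4\kappa_s^2=d\,e^{-2\mu\kappa}-(\mu\kappa-1)^2-\rho\mu^2$, positioned (after a rigid motion) as $\gamma(s)=\Phi(\mu x(s),\psi(s))$ with $x=e^{\mu\kappa}$, where $$\Phi(u,v)=\frac{1}{\sqrt{\rho d}}\left(\sqrt\rho\,u,\ \sqrt{d-\rho u^2}\sin(\sqrt{\rho d}\,v),\ \sqrt{d-\rho u^2}\cos(\sqrt{\rho d}\,v)\right).$$ Then $\gamma$ passes through the pole of $\mathbb S^2(\rho)$ (the point where $\sqrt{d-\rho\mu^2x^2}=0$, namely $(1/\sqrt\rho,0,0)$) if and only if $d=\rho\mu^2e^2$ and $x_0\ge e$, where $x_0$ is the maximum value of $x=e^{\mu\kappa}$ on the connected component of the orbit $\{(x,y): \mu^2y^2+(\log x-1)^2x^2+\rho\mu^2x^2=d\}$ (with $y=x_s$) traced by $\gamma$.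
   Context: A critical curve of $\mathbf{\Theta}_\mu(\gamma)=\int_\gamma e^{\mu\kappa}ds$ is an arc-length parametrized curve whose signed curvature satisfies $\frac{d^2}{ds^2}(e^{\mu\kappa})+(\kappa^2-\kappa/\mu+\rho)e^{\mu\kappa}=0$. In the parametrization, $\psi(s)=\int_0^s \frac{x(t)(\log x(t)-1)}{d-\rho\mu^2x(t)^2}dt$, with the arc-length parameter chosen so that $x(0)=x_0$. *)

theory Defs
  imports "HOL-Analysis.Analysis"
begin

definition Phi :: "real \<Rightarrow> real \<Rightarrow> real \<Rightarrow> real \<Rightarrow> real \<times> real \<times> real" where
  "Phi \<rho> d u v =
     (sqrt \<rho> * u / sqrt (\<rho> * d),
      sqrt (d - \<rho> * u\<^sup>2) * sin (sqrt (\<rho> * d) * v) / sqrt (\<rho> * d),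
      sqrt (d - \<rho> * u\<^sup>2) * cos (sqrt (\<rho> * d) * v) / sqrt (\<rho> * d))"

definition pole :: "real \<Rightarrow> real \<times> real \<times> real" where
  "pole \<rho> = (1 / sqrt \<rho>, 0, 0)"

definition psi :: "real \<Rightarrow> real \<Rightarrow> real \<Rightarrow> (real \<Rightarrow> real) \<Rightarrow> real \<Rightarrow> real" where
  "psi \<rho> \<mu> d x s =
     (let g = (\<lambda>t. x t * (ln (x t) - 1) / (d - \<rho> * \<mu>\<^sup>2 * (x t)\<^sup>2))
      in if 0 \<le> s then integral {0..s} g else - integral {s..0} g)"

definition gamma_curve :: "real \<Rightarrow> real \<Rightarrow> real \<Rightarrow> (real \<Rightarrow> real) \<Rightarrow> real \<Rightarrow> real \<times> real \<times> real" where
  "gamma_curve \<rho> \<mu> d x s = Phi \<rho> d (\<mu> * x s) (psi \<rho> \<mu> d x s)"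

text \<open>The orbit {(x,y) : mu^2 y^2 + (log x - 1)^2 x^2 + rho mu^2 x^2 = d} (with x = e^(mu kappa) > 0).\<close>
definition orbit :: "real \<Rightarrow> real \<Rightarrow> real \<Rightarrow> (real \<times> real) set" where
  "orbit \<rho> \<mu> d = {(a, b). 0 < a \<and> \<mu>\<^sup>2 * b\<^sup>2 + (ln a - 1)\<^sup>2 * a\<^sup>2 + \<rho> * \<mu>\<^sup>2 * a\<^sup>2 = d}"

end

theory Submission
  imports Defs
begin

text \<open>The pole is the point of \<open>S\<^sup>2(\<rho>)\<close> where the factor \<open>sqrt (d - \<rho> u\<^sup>2)\<close> of \<open>\<Phi>\<close>
  vanishes, so \<open>\<gamma>\<close> passes through it exactly when \<open>\<rho> \<mu>\<^sup>2 x\<^sup>2 = d\<close>. Along the orbit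
  \<open>\<rho> \<mu>\<^sup>2 x\<^sup>2 = d - \<mu>\<^sup>2 y\<^sup>2 - (log x - 1)\<^sup>2 x\<^sup>2 \<le> d\<close>, with equality only for \<open>x = e\<close>.
  Hence the pole is reached iff \<open>d = \<rho> \<mu>\<^sup>2 e\<^sup>2\<close> and the curve attains \<open>x = e\<close>; as
  \<open>x \<le> e\<close> on the whole orbit and the curve stays in one connected component of it,
  this happens iff the maximum \<open>x\<^sub>0\<close> of \<open>x\<close> on that component is at least \<open>e\<close>.\<close>

lemma Phi_eq_pole_iff:
  fixes \<rho> d u v :: real
  assumes "\<rho> > 0" and "d > 0" and "u \<ge> 0"
  shows "Phi \<rho> d u v = pole \<rho> \<longleftrightarrow> \<rho> * u\<^sup>2 = d"
proof
  assume "Phi \<rho> d u v = pole \<rho>"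
  then have "sqrt \<rho> * u / sqrt (\<rho> * d) = 1 / sqrt \<rho>"
    unfolding Phi_def pole_def by simp
  then have "u * sqrt \<rho> = sqrt d"
    using assms by (auto simp: real_sqrt_mult field_simps)
  then have "(u * sqrt \<rho>)\<^sup>2 = (sqrt d)\<^sup>2" by simp
  then show "\<rho> * u\<^sup>2 = d"
    using assms by (simp add: power_mult_distrib algebra_simps)
next
  assume radius: "\<rho> * u\<^sup>2 = d"
  then have "\<rho> * d = (\<rho> * u)\<^sup>2"
    by (simp add: power2_eq_square algebra_simps)
  then have "sqrt (\<rho> * d) = \<rho> * u"
    using assms by simp
  moreover have "u > 0"
    using assms radius by (cases "u = 0") auto
  then have "sqrt \<rho> * u / (\<rho> * u) = 1 / sqrt \<rho>"
    using assms by (simp add: field_simps)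
  ultimately show "Phi \<rho> d u v = pole \<rho>"
    unfolding Phi_def pole_def using radius by simp
qed

lemma orbit_radius_le:
  assumes "(a, b) \<in> orbit \<rho> \<mu> d"
  shows "\<rho> * \<mu>\<^sup>2 * a\<^sup>2 \<le> d"
proof -
  have "0 \<le> \<mu>\<^sup>2 * b\<^sup>2 + (ln a - 1)\<^sup>2 * a\<^sup>2" by simp
  then show ?thesis using assms unfolding orbit_def by auto
qed

lemma orbit_radius_eq_imp_fst_eq_exp_1:
  assumes "(a, b) \<in> orbit \<rho> \<mu> d" and "\<rho> * \<mu>\<^sup>2 * a\<^sup>2 = d"
  shows "a = exp 1"
proof -
  have "a > 0" and "\<mu>\<^sup>2 * b\<^sup>2 + (ln a - 1)\<^sup>2 * a\<^sup>2 = 0"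
    using assms unfolding orbit_def by auto
  moreover have "0 \<le> \<mu>\<^sup>2 * b\<^sup>2" and "0 \<le> (ln a - 1)\<^sup>2 * a\<^sup>2" by simp_all
  ultimately have "(ln a - 1)\<^sup>2 * a\<^sup>2 = 0" by linarith
  with \<open>a > 0\<close> have "ln a = 1" by simp
  with \<open>a > 0\<close> show ?thesis by (metis exp_ln)
qed

text \<open>With \<open>x = e\<^bsup>\<mu>\<kappa>\<^esup>\<close> one has \<open>x\<^sub>s = \<mu> \<kappa>\<^sub>s x\<close>, so multiplying the first integral by
  \<open>x\<^sup>2\<close> turns it into the equation of the orbit.\<close>

lemma first_integral_imp_in_orbit:
  fixes \<rho> \<mu> d s :: real and \<kappa> \<kappa>1 x1 :: "real \<Rightarrow> real"
  defines "x \<equiv> (\<lambda>s. exp (\<mu> * \<kappa> s))"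
  assumes "(\<kappa> has_real_derivative \<kappa>1 s) (at s)"
    and "(x has_real_derivative x1 s) (at s)"
    and "\<mu>^4 * (\<kappa>1 s)\<^sup>2 = d * exp (- 2 * \<mu> * \<kappa> s) - (\<mu> * \<kappa> s - 1)\<^sup>2 - \<rho> * \<mu>\<^sup>2"
  shows "(x s, x1 s) \<in> orbit \<rho> \<mu> d"
proof -
  have "(x has_real_derivative x s * (\<mu> * \<kappa>1 s)) (at s)"
    unfolding x_def using assms(2) by (intro DERIV_chain2[where f = exp] DERIV_exp DERIV_cmult)
  then have x1_eq: "x1 s = x s * (\<mu> * \<kappa>1 s)"
    using assms(3) DERIV_unique by blast
  have exp_x: "exp (- 2 * \<mu> * \<kappa> s) * (x s)\<^sup>2 = 1"
    unfolding x_def by (simp add: power2_eq_square flip: exp_add)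
  have "\<mu>\<^sup>2 * (x1 s)\<^sup>2 = (\<mu>^4 * (\<kappa>1 s)\<^sup>2) * (x s)\<^sup>2"
    by (simp add: x1_eq power2_eq_square power4_eq_xxxx)
  also have "\<dots> = d * (exp (- 2 * \<mu> * \<kappa> s) * (x s)\<^sup>2)
                   - (\<mu> * \<kappa> s - 1)\<^sup>2 * (x s)\<^sup>2 - \<rho> * \<mu>\<^sup>2 * (x s)\<^sup>2"
    by (subst assms(4)) (simp add: algebra_simps)
  finally show ?thesis
    using exp_x unfolding orbit_def by (simp add: x_def)
qed

lemma continuous_curve_in_connected_component:
  fixes f :: "real \<Rightarrow> 'a::topological_space"
  assumes "continuous_on UNIV f" and "range f \<subseteq> S"
  shows "f s \<in> connected_component_set S (f t)"
proof -
  have "connected (range f)"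
    using assms(1) by (rule connected_continuous_image) simp
  then have "range f \<subseteq> connected_component_set S (f t)"
    using assms(2) by (intro connected_component_maximal) auto
  then show ?thesis by blast
qed

theorem proposition3p1:
  fixes \<rho> \<mu> d x0 :: real and \<kappa> \<kappa>1 x1 x2 :: "real \<Rightarrow> real"
  defines "x \<equiv> (\<lambda>s. exp (\<mu> * \<kappa> s))"
  assumes rho_pos: "\<rho> > 0" and mu_pos: "\<mu> > 0" and d_pos: "d > 0"
    and kappa_deriv: "\<forall>s. (\<kappa> has_real_derivative \<kappa>1 s) (at s)"
    and x_deriv: "\<forall>s. (x has_real_derivative x1 s) (at s)"
    and x1_deriv: "\<forall>s. (x1 has_real_derivative x2 s) (at s)"
    and EL: "\<forall>s. x2 s + ((\<kappa> s)\<^sup>2 - \<kappa> s / \<mu> + \<rho>) * x s = 0"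
    and nonconst: "\<not> (\<exists>c. \<forall>s. \<kappa> s = c)"
    and first_integral: "\<forall>s. \<mu>^4 * (\<kappa>1 s)\<^sup>2 = d * exp (- 2 * \<mu> * \<kappa> s) - (\<mu> * \<kappa> s - 1)\<^sup>2 - \<rho> * \<mu>\<^sup>2"
    and x0_max: "\<forall>p \<in> connected_component_set (orbit \<rho> \<mu> d) (x 0, x1 0). fst p \<le> x0"
    and x_at_0: "x 0 = x0"
  shows "(\<exists>s. gamma_curve \<rho> \<mu> d x s = pole \<rho>) \<longleftrightarrow> (d = \<rho> * \<mu>\<^sup>2 * (exp 1)\<^sup>2 \<and> x0 \<ge> exp 1)"
proof -
  have in_orbit: "(x s, x1 s) \<in> orbit \<rho> \<mu> d" for s
    unfolding x_def
    by (rule first_integral_imp_in_orbit) (use kappa_deriv x_deriv first_integral x_def in auto)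
  have at_pole_iff: "gamma_curve \<rho> \<mu> d x s = pole \<rho> \<longleftrightarrow> \<rho> * \<mu>\<^sup>2 * (x s)\<^sup>2 = d" for s
    using Phi_eq_pole_iff[OF rho_pos d_pos, of "\<mu> * x s"] mu_pos
    by (simp add: gamma_curve_def x_def power_mult_distrib mult.assoc)
  have "continuous_on UNIV (\<lambda>t. (x t, x1 t))"
    using x_deriv x1_deriv
    by (intro continuous_on_Pair) (auto intro: continuous_at_imp_continuous_on DERIV_isCont)
  then have component: "(x s, x1 s) \<in> connected_component_set (orbit \<rho> \<mu> d) (x 0, x1 0)" for s
    using continuous_curve_in_connected_component[of "\<lambda>t. (x t, x1 t)"] in_orbit by blast
  show ?thesis
  proof
    assume "\<exists>s. gamma_curve \<rho> \<mu> d x s = pole \<rho>"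
    then obtain s where radius: "\<rho> * \<mu>\<^sup>2 * (x s)\<^sup>2 = d"
      using at_pole_iff by blast
    then have "x s = exp 1"
      using orbit_radius_eq_imp_fst_eq_exp_1 in_orbit by blast
    moreover have "x s \<le> x0"
      using x0_max component by fastforce
    ultimately show "d = \<rho> * \<mu>\<^sup>2 * (exp 1)\<^sup>2 \<and> x0 \<ge> exp 1"
      using radius by simp
  next
    assume d_eq: "d = \<rho> * \<mu>\<^sup>2 * (exp 1)\<^sup>2 \<and> x0 \<ge> exp 1"
    then have "(x 0)\<^sup>2 \<le> (exp 1)\<^sup>2"
      using orbit_radius_le[OF in_orbit, of 0] rho_pos mu_pos by simp
    then have "x 0 \<le> exp 1"
      by (rule power2_le_imp_le) simp
    with d_eq x_at_0 have "x 0 = exp 1"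
      by linarith
    then have "gamma_curve \<rho> \<mu> d x 0 = pole \<rho>"
      unfolding at_pole_iff using d_eq by simp
    then show "\<exists>s. gamma_curve \<rho> \<mu> d x s = pole \<rho>" ..
  qed
qed

end
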